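(* Let $f:\{-1,1\}^n\to\mathbb{R}$, $f=\sum_{S\subseteq[n]}c_S\chi_S$, be approximately $(s,\nu)$-sparse with respect to $\mathcal{I}\subseteq2^{[n]}$, $|\mathcal{I}|=s$, and let $f_{\mathcal{I}}=\sum_{S\in\mathcal{I}}c_S\chi_S$. Suppose samples $\mathbf{x}_i\in\{-1,1\}^n$ are observed as $y_i=f(\mathbf{x}_i)+\varepsilon_i$ with $|\varepsilon_i|\le\epsilon$, and suppose any two distinct values of $f_{\mathcal{I}}$ differ by at least $4(\epsilon+\nu)$. Let $\eta=\max_i y_i$ over the drawn samples, and let $\mathbf{X}_{\max}$ consist of all drawn $\mathbf{x}_i$ with $|y_i-\eta|\le 2(\epsilon+\nu)$ (Algorithm MaxCluster). Then $\mathbf{X}_{\max}$ contains exactly those drawn inputs $\mathbf{x}_i$ at which $f_{\mathcal{I}}$ attains its maximum value among the drawn samples.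
   Context: $\chi_S(\mathbf{x})=\prod_{j\in S}x_j$. $f$ is approximately $(s,\nu)$-sparse with respect to $\mathcal{I}$ if $\sum_{S\notin\mathcal{I}}|c_S|<\nu$. *)

theory Defs
  imports Main "HOL-Library.Library"
begin

text \<open>Points of the hypercube {-1,1}^n are modelled as functions nat => real whose
  values at coordinates j < n lie in {-1,1} (other coordinates are irrelevant).\<close>

definition hypercube :: "nat \<Rightarrow> (nat \<Rightarrow> real) set" where
  "hypercube n = {x. \<forall>j<n. x j = 1 \<or> x j = -1}"

definition chi :: "nat set \<Rightarrow> (nat \<Rightarrow> real) \<Rightarrow> real" where
  "chi S x = (\<Prod>j\<in>S. x j)"

definition fourier_sum :: "nat set set \<Rightarrow> (nat set \<Rightarrow> real) \<Rightarrow> (nat \<Rightarrow> real) \<Rightarrow> real" where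
  "fourier_sum F c x = (\<Sum>S\<in>F. c S * chi S x)"

definition approx_sparse ::
  "nat \<Rightarrow> (nat set \<Rightarrow> real) \<Rightarrow> nat \<Rightarrow> real \<Rightarrow> nat set set \<Rightarrow> bool" where
  "approx_sparse n c s \<nu> I \<longleftrightarrow>
     I \<subseteq> Pow {..<n} \<and> card I = s \<and> (\<Sum>S\<in>Pow {..<n} - I. \<bar>c S\<bar>) < \<nu>"

end

theory Submission
  imports Defs
begin

text \<open>Every observation is within \<open>\<epsilon> + \<nu>\<close> of the sparse part \<open>f\<^sub>I\<close>, strictly, since the
  discarded Fourier mass is below \<open>\<nu>\<close> and characters have modulus 1 on the cube. Hence the largest
  observation is within \<open>\<epsilon> + \<nu>\<close> of the largest value of \<open>f\<^sub>I\<close>, so observations at maximisers of \<open>f\<^sub>I\<close>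
  are within \<open>2(\<epsilon> + \<nu>)\<close> of it, while at any other sample \<open>f\<^sub>I\<close> is at least \<open>4(\<epsilon> + \<nu>)\<close> below its
  maximum and the observation more than \<open>2(\<epsilon> + \<nu>)\<close> below the largest one.\<close>

lemma abs_chi_hypercube:
  assumes "x \<in> hypercube n" "S \<subseteq> {..<n}"
  shows "\<bar>chi S x\<bar> = 1"
proof -
  have "\<bar>chi S x\<bar> = (\<Prod>j\<in>S. \<bar>x j\<bar>)" unfolding chi_def by (simp add: abs_prod)
  also have "\<dots> = (\<Prod>j\<in>S. 1)"
    using assms unfolding hypercube_def by (intro prod.cong) auto
  finally show ?thesis by simp
qed

lemma approx_sparse_fourier_sum_close:
  assumes "approx_sparse n c s \<nu> I" and x: "x \<in> hypercube n"
  shows "\<bar>fourier_sum (Pow {..<n}) c x - fourier_sum I c x\<bar> < \<nu>"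
proof -
  have I: "I \<subseteq> Pow {..<n}" and tail: "(\<Sum>S\<in>Pow {..<n} - I. \<bar>c S\<bar>) < \<nu>"
    using assms(1) unfolding approx_sparse_def by auto
  have "fourier_sum (Pow {..<n}) c x = fourier_sum I c x + (\<Sum>S\<in>Pow {..<n} - I. c S * chi S x)"
    unfolding fourier_sum_def using sum.subset_diff[OF I finite_Pow_iff[THEN iffD2]]
    by (simp add: add.commute)
  hence "\<bar>fourier_sum (Pow {..<n}) c x - fourier_sum I c x\<bar> = \<bar>\<Sum>S\<in>Pow {..<n} - I. c S * chi S x\<bar>"
    by simp
  also have "\<dots> \<le> (\<Sum>S\<in>Pow {..<n} - I. \<bar>c S * chi S x\<bar>)" by (rule sum_abs)
  also have "\<dots> = (\<Sum>S\<in>Pow {..<n} - I. \<bar>c S\<bar>)"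
    by (intro sum.cong) (auto simp: abs_mult abs_chi_hypercube[OF x])
  finally show ?thesis using tail by linarith
qed

lemma max_cluster_eq_maximizers:
  fixes y g :: "'a \<Rightarrow> real"
  assumes A: "finite A" "A \<noteq> {}"
    and close: "\<And>i. i \<in> A \<Longrightarrow> \<bar>y i - g i\<bar> < d"
    and sep: "\<And>i j. i \<in> A \<Longrightarrow> j \<in> A \<Longrightarrow> g i \<noteq> g j \<Longrightarrow> \<bar>g i - g j\<bar> \<ge> 4 * d"
  shows "{i \<in> A. \<bar>y i - Max (y ` A)\<bar> \<le> 2 * d} = {i \<in> A. g i = Max (g ` A)}"
proof -
  define G where "G = Max (g ` A)"
  define \<eta> where "\<eta> = Max (y ` A)"
  have "G \<in> g ` A" "\<eta> \<in> y ` A" unfolding G_def \<eta>_def using A by simp_all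
  then obtain k j where k: "k \<in> A" "g k = G" and j: "j \<in> A" "y j = \<eta>" by auto
  have g_le: "g i \<le> G" and y_le: "y i \<le> \<eta>" if "i \<in> A" for i
    unfolding G_def \<eta>_def using A that by auto
  have \<eta>_lower: "\<eta> > G - d" using y_le[OF k(1)] close[OF k(1)] k(2) by linarith
  have \<eta>_upper: "\<eta> < G + d" using j close[OF j(1)] g_le[OF j(1)] by linarith
  have "\<bar>y i - \<eta>\<bar> \<le> 2 * d \<longleftrightarrow> g i = G" if i: "i \<in> A" for i
  proof (cases "g i = G")
    case True
    then show ?thesis using close[OF i] \<eta>_lower \<eta>_upper by auto
  next
    case False
    have "\<bar>g i - g k\<bar> \<ge> 4 * d" using sep[OF i k(1)] False k(2) by auto
    hence "G - g i \<ge> 4 * d" using g_le[OF i] k(2) by linarith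
    then show ?thesis using close[OF i] \<eta>_lower False y_le[OF i] by auto
  qed
  then show ?thesis unfolding G_def \<eta>_def by auto
qed

theorem lemma3:
  fixes n s m :: nat and c :: "nat set \<Rightarrow> real" and I :: "nat set set"
    and \<nu> \<epsilon> :: real and xs :: "nat \<Rightarrow> (nat \<Rightarrow> real)"
    and y e :: "nat \<Rightarrow> real"
  assumes sparse: "approx_sparse n c s \<nu> I"
    and m_pos: "m \<ge> 1"
    and xs_cube: "\<And>i. i < m \<Longrightarrow> xs i \<in> hypercube n"
    and obs: "\<And>i. i < m \<Longrightarrow> y i = fourier_sum (Pow {..<n}) c (xs i) + e i"
    and noise: "\<And>i. i < m \<Longrightarrow> \<bar>e i\<bar> \<le> \<epsilon>"
    and sep: "\<And>u v. u \<in> hypercube n \<Longrightarrow> v \<in> hypercube n \<Longrightarrow>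
               fourier_sum I c u \<noteq> fourier_sum I c v \<Longrightarrow>
               \<bar>fourier_sum I c u - fourier_sum I c v\<bar> \<ge> 4 * (\<epsilon> + \<nu>)"
  shows "{i. i < m \<and> \<bar>y i - Max (y ` {..<m})\<bar> \<le> 2 * (\<epsilon> + \<nu>)}
       = {i. i < m \<and> fourier_sum I c (xs i) = Max ((\<lambda>j. fourier_sum I c (xs j)) ` {..<m})}"
proof -
  have close: "\<bar>y i - fourier_sum I c (xs i)\<bar> < \<epsilon> + \<nu>" if "i \<in> {..<m}" for i
  proof -
    have i: "i < m" using that by simp
    show ?thesis
      using approx_sparse_fourier_sum_close[OF sparse xs_cube[OF i]] obs[OF i] noise[OF i]
      by linarith
  qed
  have sep_samples: "\<bar>fourier_sum I c (xs i) - fourier_sum I c (xs j)\<bar> \<ge> 4 * (\<epsilon> + \<nu>)"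
    if "i \<in> {..<m}" "j \<in> {..<m}" "fourier_sum I c (xs i) \<noteq> fourier_sum I c (xs j)" for i j
    using sep[OF xs_cube xs_cube] that unfolding lessThan_iff by blast
  have "{..<m} \<noteq> {}" using m_pos by (auto simp: lessThan_empty_iff)
  from max_cluster_eq_maximizers[of "{..<m}" y "\<lambda>i. fourier_sum I c (xs i)", OF _ this close sep_samples]
  show ?thesis by simp
qed

end
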